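(* For all $k,l\ge1$, $X\in\mathfrak{W}'_k$ and $Y\in\mathfrak{W}'_l$, there exists $V\in\mathfrak{W}'_{k+l}$ with $(\lambda(X)-X)(\lambda(Y)-Y)=\lambda(V)-V$ as operators on $\mathfrak{H}^1$.
   Context: Let $\mathfrak{H}=\mathbb{Q}\langle x,y\rangle$, $\mathfrak{H}^1=\mathbb{Q}+\mathfrak{H}y$, $\mathfrak{H}^1_n$ its homogeneous part of degree $n$; $L_w(w')=ww'$; products of operators denote composition. Let $z_k=x^{k-1}y$. The harmonic product $\ast$ on $\mathfrak{H}^1$ is the $\mathbb{Q}$-bilinear map with $1\ast w=w\ast1=w$ and $z_kw\ast z_lw'=z_k(w\ast z_lw')+z_l(z_kw\ast w')+z_{k+l}(w\ast w')$; $\mathcal{H}_w(v)=w\ast v$. $\mathfrak{W}$ is the $\mathbb{Q}$-span of the operators $\mathcal{H}_w$ ($w\in\mathfrak{H}^1$) on $\mathfrak{H}^1$; $\mathfrak{W}'$ (resp. $\mathfrak{W}'_n$) the $\mathbb{Q}$-span of the operators $L_{z_k}\mathcal{H}_w$ on $\mathfrak{H}^1$ with $k\ge1$, $w\in\mathfrak{H}^1$ (resp. $1\le k\le n$, $w\in\mathfrak{H}^1_{n-k}$). The $L_{z_k}\mathcal{H}_w$ over distinct pairs $(k,w)$, $w$ a word, are linearly independent, and $\lambda:\mathfrak{W}'\to\mathfrak{W}$ is the $\mathbb{Q}$-linear map with $\lambda(L_{z_k}\mathcal{H}_w)=\mathcal{H}_{z_kw}$. *)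

theory Defs
  imports Complex_Main
begin

datatype letter = x | y

type_synonym word = "letter list"

text \<open>Elements of H: finitely supported functions word => rat (coefficients).\<close>
type_synonym poly = "word \<Rightarrow> rat"

definition supp :: "('a \<Rightarrow> rat) \<Rightarrow> 'a set" where
  "supp p = {u. p u \<noteq> 0}"

definition mon :: "word \<Rightarrow> poly" where
  "mon w = (\<lambda>u. if u = w then 1 else 0)"

text \<open>Words spanning H^1 = Q + H y: the empty word or words ending in y.\<close>
definition h1word :: "word \<Rightarrow> bool" where
  "h1word w \<longleftrightarrow> w = [] \<or> last w = y"

definition inH1 :: "poly \<Rightarrow> bool" where
  "inH1 p \<longleftrightarrow> finite (supp p) \<and> (\<forall>w \<in> supp p. h1word w)"

definition z :: "nat \<Rightarrow> word" where
  "z k = replicate (k - 1) x @ [y]"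

definition zword :: "nat list \<Rightarrow> word" where
  "zword ks = concat (map z ks)"

definition zdec :: "word \<Rightarrow> nat list" where
  "zdec w = (THE ks. (\<forall>k \<in> set ks. 0 < k) \<and> zword ks = w)"

text \<open>Harmonic product on sequences of z-indices, with values in
  coefficient functions on such sequences.\<close>
definition cons_ind :: "nat \<Rightarrow> (nat list \<Rightarrow> rat) \<Rightarrow> (nat list \<Rightarrow> rat)" where
  "cons_ind k f = (\<lambda>u. case u of [] \<Rightarrow> 0 | j # u' \<Rightarrow> if j = k then f u' else 0)"

fun qsh :: "nat list \<Rightarrow> nat list \<Rightarrow> (nat list \<Rightarrow> rat)" where
  "qsh [] b = (\<lambda>u. if u = b then 1 else 0)"
| "qsh (k # a) [] = (\<lambda>u. if u = k # a then 1 else 0)"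
| "qsh (k # a) (l # b) = (\<lambda>u. cons_ind k (qsh a (l # b)) u
                              + cons_ind l (qsh (k # a) b) u
                              + cons_ind (k + l) (qsh a b) u)"

definition hw :: "word \<Rightarrow> word \<Rightarrow> poly" where
  "hw u v = (\<lambda>w. if h1word w then qsh (zdec u) (zdec v) (zdec w) else 0)"

definition harm :: "poly \<Rightarrow> poly \<Rightarrow> poly" where
  "harm p q = (\<lambda>w. \<Sum>u \<in> supp p. \<Sum>v \<in> supp q. p u * q v * hw u v w)"

definition Hop :: "poly \<Rightarrow> poly \<Rightarrow> poly" where
  "Hop p = (\<lambda>v. harm p v)"

definition Lw :: "word \<Rightarrow> poly \<Rightarrow> poly" where
  "Lw u p = (\<lambda>w. if take (length u) w = u then p (drop (length u) w) else 0)"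

text \<open>An element of W' is given as a finite formal combination
  c = sum c(j,w) [L_{z_j} H_w] over pairs (j,w), w a word.  Since these operators
  are linearly independent (standing fact of the paper), this is the same as an
  element of W', and lambda is well defined on it.\<close>
type_synonym comb = "(nat \<times> word) \<Rightarrow> rat"

definition inWp :: "nat \<Rightarrow> comb \<Rightarrow> bool" where
  "inWp n c \<longleftrightarrow> finite (supp c) \<and>
     (\<forall>(j, w) \<in> supp c. 1 \<le> j \<and> j \<le> n \<and> h1word w \<and> length w = n - j)"

definition Op :: "comb \<Rightarrow> poly \<Rightarrow> poly" where
  "Op c = (\<lambda>v w. \<Sum>(j, u) \<in> supp c. c (j, u) * Lw (z j) (Hop (mon u) v) w)"

text \<open>lambda applied to it: L_{z_j} H_u |-> H_{z_j u}.\<close>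
definition Lam :: "comb \<Rightarrow> poly \<Rightarrow> poly" where
  "Lam c = (\<lambda>v w. \<Sum>(j, u) \<in> supp c. c (j, u) * Hop (mon (z j @ u)) v w)"

definition Dop :: "comb \<Rightarrow> poly \<Rightarrow> poly" where
  "Dop c = (\<lambda>v w. Lam c v w - Op c v w)"

end

theory Submission
  imports Defs "HOL-Library.Function_Algebras"
begin

(* On a generator X = L_{z_j} H_u of W' we have lambda(X) - X = D_{j,u}, where
   D_{j,u} = H_{z_j u} - L_{z_j} H_u.  Both sides of the theorem are bilinear in (X, Y), so it
   suffices to treat two generators D_{j,u} and D_{m,w}.  Two facts about the harmonic product
   drive the computation:
     (a) associativity, i.e. H_{a * b} = H_a H_b, and
     (b) the defining recursion read as an operator identity
         H_{z_j a} L_{z_m} = L_{z_j} H_a L_{z_m} + L_{z_m} H_{z_j a} + L_{z_{j+m}} H_a.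
   Expanding D_{j,u} D_{m,w} with (a) and (b) gives D_{j,u} D_{m,w} = lambda(V) - V for
   V = L_{z_j} H_{u * z_m w} + L_{z_m} H_{z_j u * w} + L_{z_{j+m}} H_{u * w}, and since * preserves
   weight, V lies in W'_{k+l} when z_j u has weight k and z_m w has weight l. *)

section \<open>Decomposition of H^1 words into the letters z_k\<close>

definition all_pos :: "nat list \<Rightarrow> bool" where
  "all_pos ks \<longleftrightarrow> (\<forall>k\<in>set ks. 0 < k)"

lemma length_z [simp]: "1 \<le> k \<Longrightarrow> length (z k) = k"
  by (simp add: z_def)

lemma z_not_Nil [simp]: "z k \<noteq> []" "[] \<noteq> z k"
  by (simp_all add: z_def)

lemma last_z [simp]: "last (z k) = y"
  by (simp add: z_def)

lemma zword_Nil [simp]: "zword [] = []"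
  by (simp add: zword_def)

lemma zword_Cons [simp]: "zword (k # ks) = z k @ zword ks"
  by (simp add: zword_def)

lemma h1word_Nil [simp]: "h1word []"
  by (simp add: h1word_def)

lemma h1word_z_append_iff: "h1word (z k @ a) \<longleftrightarrow> h1word a"
  by (cases "a = []") (auto simp: h1word_def)

lemma h1word_z_append: "h1word a \<Longrightarrow> h1word (z k @ a)"
  by (simp add: h1word_z_append_iff)

text \<open>A word starting with z_k determines k: it is one more than the number of leading x's.\<close>
lemma z_append_inj:
  assumes "z k @ r = z k' @ r'" "1 \<le> k" "1 \<le> k'"
  shows "k = k' \<and> r = r'"
proof -
  have "takeWhile (\<lambda>c. c = x) (replicate m x @ y # s) = replicate m x" for m s
    by (induction m) auto
  then have lead: "takeWhile (\<lambda>c. c = x) (z n @ s) = replicate (n - 1) x" for n s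
    by (simp add: z_def)
  have "replicate (k - 1) x = replicate (k' - 1) x"
    using arg_cong[OF assms(1), of "takeWhile (\<lambda>c. c = x)"] by (simp add: lead)
  then have "k - 1 = k' - 1" by (metis length_replicate)
  then have "k = k'" using assms(2,3) by arith
  then show ?thesis using assms(1) by simp
qed

lemma zword_inj: "all_pos ks \<Longrightarrow> all_pos ks' \<Longrightarrow> zword ks = zword ks' \<Longrightarrow> ks = ks'"
proof (induction ks arbitrary: ks')
  case Nil
  then show ?case by (cases ks') auto
next
  case (Cons k ks)
  then obtain k' ks'' where ks': "ks' = k' # ks''"
    by (cases ks') auto
  with Cons.prems have "k = k' \<and> zword ks = zword ks''"
    by (intro z_append_inj) (auto simp: all_pos_def)
  then show ?case using Cons.IH Cons.prems ks' by (auto simp: all_pos_def)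
qed

lemma h1word_split:
  assumes "h1word w" "w \<noteq> []"
  shows "\<exists>k r. 1 \<le> k \<and> h1word r \<and> w = z k @ r \<and> length r < length w"
proof -
  have last_y: "last w = y" using assms by (simp add: h1word_def)
  then have "y \<in> set w" using assms(2) by (metis last_in_set)
  then obtain p r where w: "w = p @ y # r" and "y \<notin> set p"
    by (meson split_list_first)
  have "\<forall>c\<in>set p. c = x"
  proof
    fix c assume "c \<in> set p"
    with \<open>y \<notin> set p\<close> have "c \<noteq> y" by auto
    then show "c = x" by (cases c) auto
  qed
  then have "p = replicate (length p) x"
    by (simp add: replicate_length_same)
  then have "w = z (Suc (length p)) @ r" using w by (simp add: z_def)
  moreover have "h1word r"
    using last_y w by (cases "r = []") (auto simp: h1word_def)
  ultimately show ?thesis using w by (intro exI[of _ "Suc (length p)"] exI[of _ r]) auto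
qed

lemma h1word_zword_ex: "h1word w \<Longrightarrow> \<exists>ks. all_pos ks \<and> zword ks = w"
proof (induction "length w" arbitrary: w rule: less_induct)
  case less
  show ?case
  proof (cases "w = []")
    case True
    then show ?thesis by (intro exI[of _ "[]"]) (simp add: all_pos_def)
  next
    case False
    then obtain k r where kr: "1 \<le> k" "h1word r" "w = z k @ r" "length r < length w"
      using h1word_split less.prems by blast
    then obtain ks where "all_pos ks" "zword ks = r" using less.hyps by blast
    then show ?thesis using kr by (intro exI[of _ "k # ks"]) (simp add: all_pos_def)
  qed
qed

lemma zdec_zword: "all_pos ks \<Longrightarrow> zdec (zword ks) = ks"
  unfolding zdec_def
proof (rule the_equality)
  fix ks' assume "(\<forall>k\<in>set ks'. 0 < k) \<and> zword ks' = zword ks" "all_pos ks"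
  then show "ks' = ks" using zword_inj[of ks' ks] by (simp add: all_pos_def)
qed (simp add: all_pos_def)

lemma zdec_h1word: "h1word w \<Longrightarrow> all_pos (zdec w) \<and> zword (zdec w) = w"
proof -
  assume "h1word w"
  then obtain ks where "all_pos ks" "zword ks = w" using h1word_zword_ex by blast
  then show ?thesis using zdec_zword[of ks] by simp
qed

lemma zdec_z_append: "h1word a \<Longrightarrow> 1 \<le> k \<Longrightarrow> zdec (z k @ a) = k # zdec a"
  using zdec_h1word[of a] zdec_zword[of "k # zdec a"] by (simp add: all_pos_def)

lemma zdec_Nil [simp]: "zdec [] = []"
  using zdec_zword[of "[]"] by (simp add: all_pos_def)

lemma zdec_inj: "h1word w \<Longrightarrow> h1word w' \<Longrightarrow> zdec w = zdec w' \<longleftrightarrow> w = w'"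
  using zdec_h1word[of w] zdec_h1word[of w'] by metis

lemma length_zword: "all_pos ks \<Longrightarrow> length (zword ks) = sum_list ks"
  by (induction ks) (auto simp: all_pos_def)


section \<open>The harmonic product of two words\<close>

abbreviation finsupp :: "('a \<Rightarrow> rat) \<Rightarrow> bool" where
  "finsupp p \<equiv> finite (supp p)"

abbreviation h1supp :: "poly \<Rightarrow> bool" where
  "h1supp p \<equiv> \<forall>w\<in>supp p. h1word w"

lemma cons_ind_zdec:
  assumes "h1word w" "1 \<le> k"
  shows "cons_ind k f (zdec w) =
    (if take (length (z k)) w = z k then f (zdec (drop (length (z k)) w)) else 0)"
proof (cases "zdec w")
  case Nil
  then have "w = []" using zdec_inj[OF assms(1) h1word_Nil] by simp
  then show ?thesis using Nil by (simp add: cons_ind_def)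
next
  case (Cons j ks)
  then have w: "w = z j @ zword ks" "all_pos (j # ks)" using zdec_h1word[OF assms(1)] by auto
  have j: "1 \<le> j" using w by (auto simp: all_pos_def)
  show ?thesis
  proof (cases "j = k")
    case True
    then show ?thesis using Cons w assms zdec_zword[of ks] by (simp add: cons_ind_def all_pos_def)
  next
    case False
    have "take (length (z k)) w \<noteq> z k"
    proof
      assume "take (length (z k)) w = z k"
      then have "w = z k @ drop (length (z k)) w" by (metis append_take_drop_id)
      then have "j = k" using w j assms z_append_inj by metis
      then show False using False by simp
    qed
    then show ?thesis using Cons False by (simp add: cons_ind_def)
  qed
qed

lemma cons_ind_nonzero: "cons_ind k f s \<noteq> 0 \<Longrightarrow> \<exists>s'. s = k # s' \<and> f s' \<noteq> 0"
  by (cases s) (auto simp: cons_ind_def split: if_splits)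

lemma supp_cons_ind: "supp (cons_ind k f) \<subseteq> (\<lambda>u. k # u) ` supp f"
  unfolding supp_def using cons_ind_nonzero by blast

lemma finite_supp_qsh: "finsupp (qsh a b)"
proof (induction a b rule: qsh.induct)
  case (3 k a l b)
  have "supp (qsh (k # a) (l # b)) \<subseteq> supp (cons_ind k (qsh a (l # b)))
      \<union> supp (cons_ind l (qsh (k # a) b)) \<union> supp (cons_ind (k + l) (qsh a b))"
    by (auto simp: supp_def)
  also have "\<dots> \<subseteq> (\<lambda>u. k # u) ` supp (qsh a (l # b))
      \<union> (\<lambda>u. l # u) ` supp (qsh (k # a) b) \<union> (\<lambda>u. (k + l) # u) ` supp (qsh a b)"
    using supp_cons_ind by blast
  finally show ?case using 3 finite_subset by blast
qed (simp_all add: supp_def)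

lemma qsh_weight: "qsh a b s \<noteq> 0 \<Longrightarrow> sum_list s = sum_list a + sum_list b"
proof (induction a b arbitrary: s rule: qsh.induct)
  case (3 k a l b)
  have "cons_ind k (qsh a (l # b)) s \<noteq> 0 \<or> cons_ind l (qsh (k # a) b) s \<noteq> 0
      \<or> cons_ind (k + l) (qsh a b) s \<noteq> 0"
    using "3.prems" by auto
  then consider "cons_ind k (qsh a (l # b)) s \<noteq> 0" | "cons_ind l (qsh (k # a) b) s \<noteq> 0"
    | "cons_ind (k + l) (qsh a b) s \<noteq> 0"
    by blast
  then show ?case
  proof cases
    case 1
    then obtain s' where "s = k # s'" "qsh a (l # b) s' \<noteq> 0" using cons_ind_nonzero by blast
    then show ?thesis using "3.IH"(1)[of s'] by simp
  next
    case 2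
    then obtain s' where "s = l # s'" "qsh (k # a) b s' \<noteq> 0" using cons_ind_nonzero by blast
    then show ?thesis using "3.IH"(2)[of s'] by simp
  next
    case 3
    then obtain s' where "s = (k + l) # s'" "qsh a b s' \<noteq> 0" using cons_ind_nonzero by blast
    then show ?thesis using "3.IH"(3)[of s'] by simp
  qed
qed (auto split: if_splits)

lemma qsh_Nil_right: "qsh a [] = (\<lambda>u. if u = a then 1 else 0)"
  by (cases a) auto

lemma finite_supp_hw: "finsupp (hw u v)"
proof -
  have "supp (hw u v) \<subseteq> zword ` supp (qsh (zdec u) (zdec v))"
  proof
    fix w assume "w \<in> supp (hw u v)"
    then have "h1word w" "zdec w \<in> supp (qsh (zdec u) (zdec v))"
      by (auto simp: supp_def hw_def split: if_splits)
    then show "w \<in> zword ` supp (qsh (zdec u) (zdec v))" using zdec_h1word[of w] by force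
  qed
  then show ?thesis using finite_supp_qsh finite_subset by blast
qed

lemma h1supp_hw: "h1supp (hw u v)"
  by (auto simp: supp_def hw_def split: if_splits)

lemma length_supp_hw:
  assumes "h1word u" "h1word v" "w \<in> supp (hw u v)"
  shows "length w = length u + length v"
proof -
  have "h1word w" "qsh (zdec u) (zdec v) (zdec w) \<noteq> 0"
    using assms by (auto simp: supp_def hw_def split: if_splits)
  then have "sum_list (zdec w) = sum_list (zdec u) + sum_list (zdec v)" using qsh_weight by blast
  then show ?thesis using length_zword zdec_h1word assms \<open>h1word w\<close> by metis
qed

lemma hw_Nil_left: "h1word v \<Longrightarrow> hw [] v = mon v"
  by (auto simp: fun_eq_iff hw_def mon_def zdec_inj)

lemma hw_Nil_right: "h1word u \<Longrightarrow> hw u [] = mon u"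
  by (auto simp: fun_eq_iff hw_def mon_def zdec_inj qsh_Nil_right)

lemma Lw_hw:
  "Lw (z k) (hw a b) w = (if take (length (z k)) w = z k \<and> h1word w
     then qsh (zdec a) (zdec b) (zdec (drop (length (z k)) w)) else 0)"
proof -
  have "take (length (z k)) w = z k \<Longrightarrow> h1word (drop (length (z k)) w) = h1word w"
    by (metis append_take_drop_id h1word_z_append_iff)
  then show ?thesis by (auto simp: Lw_def hw_def simp del: length_z)
qed

lemma hw_rec:
  assumes "1 \<le> k" "1 \<le> l" "h1word a" "h1word b"
  shows "hw (z k @ a) (z l @ b) =
    Lw (z k) (hw a (z l @ b)) + Lw (z l) (hw (z k @ a) b) + Lw (z (k + l)) (hw a b)"
proof
  fix w
  show "hw (z k @ a) (z l @ b) w =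
    (Lw (z k) (hw a (z l @ b)) + Lw (z l) (hw (z k @ a) b) + Lw (z (k + l)) (hw a b)) w"
  proof (cases "h1word w")
    case True
    have "hw (z k @ a) (z l @ b) w = qsh (k # zdec a) (l # zdec b) (zdec w)"
      using True assms by (simp add: hw_def zdec_z_append)
    then show ?thesis unfolding plus_fun_apply Lw_hw
      using True assms by (simp add: zdec_z_append h1word_z_append cons_ind_zdec[OF True] del: length_z)
  next
    case False
    then show ?thesis unfolding plus_fun_apply Lw_hw by (simp add: hw_def)
  qed
qed


section \<open>Linear extension of kernels\<close>

text \<open>The linear extension of a kernel K (an image K u for every basis element u) to a finitely
  supported coefficient function p.  All operators of the paper are of this form.\<close>
definition linext :: "('a \<Rightarrow> 'b \<Rightarrow> rat) \<Rightarrow> ('a \<Rightarrow> rat) \<Rightarrow> 'b \<Rightarrow> rat" where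
  "linext K p = (\<lambda>w. \<Sum>u\<in>supp p. p u * K u w)"

lemma linext_superset:
  assumes "finite A" "supp p \<subseteq> A"
  shows "linext K p w = (\<Sum>u\<in>A. p u * K u w)"
  unfolding linext_def using assms by (intro sum.mono_neutral_left) (auto simp: supp_def)

lemma supp_linext: "supp (linext K p) \<subseteq> (\<Union>u\<in>supp p. supp (K u))"
proof
  fix w assume "w \<in> supp (linext K p)"
  then have "(\<Sum>u\<in>supp p. p u * K u w) \<noteq> 0" by (simp add: supp_def linext_def)
  then obtain u where "u \<in> supp p" "p u * K u w \<noteq> 0" by (meson sum.neutral)
  then show "w \<in> (\<Union>u\<in>supp p. supp (K u))" by (auto simp: supp_def)
qed

lemma finsupp_linext: "finsupp p \<Longrightarrow> (\<forall>u\<in>supp p. finsupp (K u)) \<Longrightarrow> finsupp (linext K p)"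
  using supp_linext finite_subset by (metis finite_UN_I)

lemma linext_cong: "(\<And>u. u \<in> supp p \<Longrightarrow> K u = K' u) \<Longrightarrow> linext K p = linext K' p"
  by (simp add: linext_def)

lemma linext_comp:
  assumes "finsupp p" "\<forall>u\<in>supp p. finsupp (G u)"
  shows "linext F (linext G p) = linext (\<lambda>u. linext F (G u)) p"
proof
  fix w
  define B where "B = (\<Union>u\<in>supp p. supp (G u))"
  have B: "finite B" using assms by (simp add: B_def)
  have "linext F (linext G p) w = (\<Sum>v\<in>B. linext G p v * F v w)"
    by (rule linext_superset[OF B]) (unfold B_def, rule supp_linext)
  also have "\<dots> = (\<Sum>v\<in>B. \<Sum>u\<in>supp p. p u * G u v * F v w)"
    by (simp add: linext_def sum_distrib_right)
  also have "\<dots> = (\<Sum>u\<in>supp p. \<Sum>v\<in>B. p u * G u v * F v w)"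
    by (rule sum.swap)
  also have "\<dots> = (\<Sum>u\<in>supp p. p u * linext F (G u) w)"
  proof (rule sum.cong)
    fix u assume u: "u \<in> supp p"
    have "linext F (G u) w = (\<Sum>v\<in>B. G u v * F v w)"
      by (rule linext_superset[OF B]) (unfold B_def, rule UN_upper, rule u)
    then show "(\<Sum>v\<in>B. p u * G u v * F v w) = p u * linext F (G u) w"
      by (simp add: sum_distrib_left mult.assoc)
  qed simp
  finally show "linext F (linext G p) w = linext (\<lambda>u. linext F (G u)) p w"
    by (simp add: linext_def)
qed

lemma linext_swap:
  "linext (\<lambda>u. linext (\<lambda>v. A u v) c) p = linext (\<lambda>v. linext (\<lambda>u. A u v) p) c"
proof
  fix w
  have "linext (\<lambda>u. linext (\<lambda>v. A u v) c) p w = (\<Sum>u\<in>supp p. \<Sum>v\<in>supp c. p u * c v * A u v w)"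
    by (simp add: linext_def sum_distrib_left mult.assoc)
  also have "\<dots> = (\<Sum>v\<in>supp c. \<Sum>u\<in>supp p. p u * c v * A u v w)" by (rule sum.swap)
  also have "\<dots> = linext (\<lambda>v. linext (\<lambda>u. A u v) p) c w"
    by (simp add: linext_def sum_distrib_left mult.assoc mult.left_commute)
  finally show "linext (\<lambda>u. linext (\<lambda>v. A u v) c) p w = linext (\<lambda>v. linext (\<lambda>u. A u v) p) c w" .
qed

lemma supp_tensor: "supp (\<lambda>(a, b). c1 a * c2 b) = supp c1 \<times> supp c2"
  by (auto simp: supp_def)

lemma linext_tensor:
  "linext (\<lambda>a. linext (\<lambda>b. K a b) c2) c1 = linext (\<lambda>(a, b). K a b) (\<lambda>(a, b). c1 a * c2 b)"
proof
  fix w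
  have "linext (\<lambda>a. linext (\<lambda>b. K a b) c2) c1 w =
      (\<Sum>a\<in>supp c1. \<Sum>b\<in>supp c2. c1 a * c2 b * K a b w)"
    by (simp add: linext_def sum_distrib_left mult.assoc)
  also have "\<dots> = (\<Sum>(a, b)\<in>supp c1 \<times> supp c2. c1 a * c2 b * K a b w)"
    by (simp add: sum.cartesian_product)
  finally show "linext (\<lambda>a. linext (\<lambda>b. K a b) c2) c1 w =
      linext (\<lambda>(a, b). K a b) (\<lambda>(a, b). c1 a * c2 b) w"
    by (simp add: linext_def supp_tensor case_prod_beta)
qed

lemma linext_add_kernel: "linext (\<lambda>u. K1 u + K2 u) p = linext K1 p + linext K2 p"
  by (simp add: linext_def fun_eq_iff sum.distrib distrib_left)

lemma linext_diff_kernel: "linext (\<lambda>u. K1 u - K2 u) p = linext K1 p - linext K2 p"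
  by (simp add: linext_def fun_eq_iff sum_subtractf right_diff_distrib)

lemma finsupp_add: "finsupp p \<Longrightarrow> finsupp q \<Longrightarrow> finsupp (p + q)"
  by (rule finite_subset[of _ "supp p \<union> supp q"]) (auto simp: supp_def)

lemma finsupp_diff: "finsupp p \<Longrightarrow> finsupp q \<Longrightarrow> finsupp (p - q)"
  by (rule finite_subset[of _ "supp p \<union> supp q"]) (auto simp: supp_def)

lemma linext_add:
  assumes "finsupp p" "finsupp q"
  shows "linext K (p + q) = linext K p + linext K q"
proof
  fix w
  have A: "finite (supp p \<union> supp q)" "supp (p + q) \<subseteq> supp p \<union> supp q"
    using assms by (auto simp: supp_def)
  show "linext K (p + q) w = (linext K p + linext K q) w"
    using A by (simp add: linext_superset[of "supp p \<union> supp q"] sum.distrib distrib_right)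
qed

lemma linext_diff:
  assumes "finsupp p" "finsupp q"
  shows "linext K (p - q) = linext K p - linext K q"
proof
  fix w
  have A: "finite (supp p \<union> supp q)" "supp (p - q) \<subseteq> supp p \<union> supp q"
    using assms by (auto simp: supp_def)
  show "linext K (p - q) w = (linext K p - linext K q) w"
    using A by (simp add: linext_superset[of "supp p \<union> supp q"] sum_subtractf left_diff_distrib)
qed

lemma supp_mon: "supp (mon u) = {u}"
  by (auto simp: supp_def mon_def)

lemma finsupp_mon: "finsupp (mon u)"
  by (simp add: supp_mon)

lemma linext_mon: "linext K (mon u) = K u"
  unfolding linext_def supp_mon by (simp add: mon_def)

lemma linext_mon_id: "finsupp p \<Longrightarrow> linext mon p = p"
proof
  fix w assume "finsupp p"
  have "linext mon p w = (\<Sum>u\<in>supp p. if u = w then p u else 0)"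
    by (auto simp: linext_def mon_def intro!: sum.cong)
  also have "\<dots> = p w" using \<open>finsupp p\<close> by (simp add: sum.delta' supp_def)
  finally show "linext mon p w = p w" .
qed

lemma Lw_linext: "Lw v (linext K p) = linext (\<lambda>u. Lw v (K u)) p"
  by (simp add: Lw_def linext_def fun_eq_iff)

lemma Lw_mon: "Lw v (mon u) = mon (v @ u)"
proof
  fix w
  have "w = v @ u \<longleftrightarrow> take (length v) w = v \<and> drop (length v) w = u"
    by (metis append_eq_conv_conj)
  then show "Lw v (mon u) w = mon (v @ u) w" by (auto simp: Lw_def mon_def)
qed

lemma Lw_add: "Lw v (p + q) = Lw v p + Lw v q"
  by (simp add: Lw_def fun_eq_iff)

lemma Lw_diff: "Lw v (p - q) = Lw v p - Lw v q"
  by (simp add: Lw_def fun_eq_iff)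

lemma Lw_Nil: "Lw [] p = p"
  by (simp add: Lw_def fun_eq_iff)

lemma Lw_as_linext: "finsupp p \<Longrightarrow> Lw v p = linext (\<lambda>u. mon (v @ u)) p"
  using Lw_linext[of v mon p] by (simp add: linext_mon_id Lw_mon)

lemma finsupp_Lw: "finsupp p \<Longrightarrow> finsupp (Lw v p)"
  by (simp add: Lw_as_linext finsupp_linext finsupp_mon)


section \<open>Bilinearity of the harmonic product\<close>

lemma harm_linext: "harm p q = linext (\<lambda>u. linext (hw u) q) p"
  by (simp add: harm_def linext_def fun_eq_iff sum_distrib_left mult.assoc)

lemma harm_mon_left: "harm (mon u) q = linext (hw u) q"
  by (simp add: harm_linext linext_mon)

lemma hw_harm: "hw u v = harm (mon u) (mon v)"
  by (simp add: harm_mon_left linext_mon)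

lemma finsupp_harm: "finsupp p \<Longrightarrow> finsupp q \<Longrightarrow> finsupp (harm p q)"
  unfolding harm_linext by (intro finsupp_linext ballI) (auto intro: finsupp_linext finite_supp_hw)

lemma h1supp_harm: "h1supp (harm p q)"
proof
  fix w assume "w \<in> supp (harm p q)"
  moreover have "\<not> h1word w \<Longrightarrow> harm p q w = 0" by (simp add: harm_def hw_def)
  ultimately show "h1word w" by (auto simp: supp_def)
qed

lemma harm_first: "harm p q = linext (\<lambda>u. harm (mon u) q) p"
  unfolding harm_mon_left by (rule harm_linext)

lemma harm_second: "harm p q = linext (\<lambda>v. harm p (mon v)) q"
  unfolding harm_linext linext_mon by (rule linext_swap)

lemma harm_linext_left:
  assumes "finsupp p" "\<forall>u\<in>supp p. finsupp (G u)"
  shows "harm (linext G p) q = linext (\<lambda>u. harm (G u) q) p"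
proof -
  have "harm (linext G p) q = linext (\<lambda>u. harm (mon u) q) (linext G p)" by (rule harm_first)
  also have "\<dots> = linext (\<lambda>u. linext (\<lambda>u. harm (mon u) q) (G u)) p" by (rule linext_comp[OF assms])
  also have "\<dots> = linext (\<lambda>u. harm (G u) q) p" by (simp add: harm_first[symmetric])
  finally show ?thesis .
qed

lemma harm_linext_right:
  assumes "finsupp c" "\<forall>u\<in>supp c. finsupp (G u)"
  shows "harm p (linext G c) = linext (\<lambda>u. harm p (G u)) c"
proof -
  have "harm p (linext G c) = linext (\<lambda>v. harm p (mon v)) (linext G c)"
    by (rule harm_second)
  also have "\<dots> = linext (\<lambda>u. linext (\<lambda>v. harm p (mon v)) (G u)) c" by (rule linext_comp[OF assms])
  also have "\<dots> = linext (\<lambda>u. harm p (G u)) c" by (simp add: harm_second[symmetric])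
  finally show ?thesis .
qed

lemma harm_add_left: "finsupp p1 \<Longrightarrow> finsupp p2 \<Longrightarrow> harm (p1 + p2) q = harm p1 q + harm p2 q"
  by (subst (1 2 3) harm_first) (rule linext_add)

lemma harm_add_right: "finsupp q1 \<Longrightarrow> finsupp q2 \<Longrightarrow> harm p (q1 + q2) = harm p q1 + harm p q2"
  by (subst (1 2 3) harm_second) (rule linext_add)

lemma harm_diff_right: "finsupp q1 \<Longrightarrow> finsupp q2 \<Longrightarrow> harm p (q1 - q2) = harm p q1 - harm p q2"
  by (subst (1 2 3) harm_second) (rule linext_diff)

lemma harm_mon_Nil_left: "finsupp q \<Longrightarrow> h1supp q \<Longrightarrow> harm (mon []) q = q"
  by (simp add: harm_mon_left linext_mon_id hw_Nil_left cong: linext_cong)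

lemma harm_mon_Nil_right: "finsupp p \<Longrightarrow> h1supp p \<Longrightarrow> harm p (mon []) = p"
  by (subst harm_first) (simp add: hw_harm[symmetric] hw_Nil_right linext_mon_id cong: linext_cong)

lemma harm_Lw_Lw:
  assumes "finsupp P" "finsupp Q"
  shows "harm (Lw v P) (Lw v' Q) = linext (\<lambda>a. linext (\<lambda>b. hw (v @ a) (v' @ b)) Q) P"
proof -
  have "harm (Lw v P) (Lw v' Q) = linext (\<lambda>a. harm (mon (v @ a)) (Lw v' Q)) P"
    unfolding Lw_as_linext[OF assms(1)] by (rule harm_linext_left) (use assms finsupp_mon in auto)
  also have "\<dots> = linext (\<lambda>a. linext (\<lambda>b. hw (v @ a) (v' @ b)) Q) P"
    unfolding Lw_as_linext[OF assms(2)]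
    by (rule linext_cong, subst harm_linext_right) (use assms finsupp_mon hw_harm in auto)
  finally show ?thesis .
qed

lemma harm_rec:
  assumes kl: "1 \<le> k" "1 \<le> l"
    and P: "finsupp P" "h1supp P" and Q: "finsupp Q" "h1supp Q"
  shows "harm (Lw (z k) P) (Lw (z l) Q) =
    Lw (z k) (harm P (Lw (z l) Q)) + Lw (z l) (harm (Lw (z k) P) Q) + Lw (z (k + l)) (harm P Q)"
proof -
  have expand: "harm (Lw v P) (Lw v' Q) = linext (\<lambda>a. linext (\<lambda>b. hw (v @ a) (v' @ b)) Q) P"
    for v v' by (rule harm_Lw_Lw[OF P(1) Q(1)])
  have "harm (Lw (z k) P) (Lw (z l) Q) = linext (\<lambda>a. linext (\<lambda>b. Lw (z k) (hw a (z l @ b))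
      + Lw (z l) (hw (z k @ a) b) + Lw (z (k + l)) (hw a b)) Q) P"
    unfolding expand by (intro linext_cong) (use hw_rec kl P Q in auto)
  also have "\<dots> = Lw (z k) (harm P (Lw (z l) Q)) + Lw (z l) (harm (Lw (z k) P) Q)
      + Lw (z (k + l)) (harm P Q)"
    using expand[of "[]" "z l"] expand[of "z k" "[]"] expand[of "[]" "[]"]
    by (simp add: linext_add_kernel Lw_linext Lw_Nil)
  finally show ?thesis .
qed


section \<open>Associativity of the harmonic product\<close>

text \<open>Expansion of a triple product of z_i a, z_j b, z_k c according to its first letter, which
  is one of z_i, z_j, z_{i+j}, z_k, z_{i+k}, z_{j+k}, z_{i+j+k}.  The bracketing of the triple
  product is left open as the parameter F.\<close>
definition triple_split ::
    "(word \<Rightarrow> word \<Rightarrow> word \<Rightarrow> poly) \<Rightarrow> nat \<Rightarrow> nat \<Rightarrow> nat \<Rightarrow> word \<Rightarrow> word \<Rightarrow> word \<Rightarrow> poly" where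
  "triple_split F i j k a b c =
     Lw (z i) (F a (z j @ b) (z k @ c)) + Lw (z j) (F (z i @ a) b (z k @ c))
     + Lw (z (i + j)) (F a b (z k @ c)) + Lw (z k) (F (z i @ a) (z j @ b) c)
     + Lw (z (i + k)) (F a (z j @ b) c) + Lw (z (j + k)) (F (z i @ a) b c)
     + Lw (z (i + j + k)) (F a b c)"

lemma harm_hw_mon_split:
  assumes ijk: "1 \<le> i" "1 \<le> j" "1 \<le> k" and abc: "h1word a" "h1word b" "h1word c"
  shows "harm (hw (z i @ a) (z j @ b)) (mon (z k @ c)) =
    triple_split (\<lambda>a b c. harm (hw a b) (mon c)) i j k a b c"
proof -
  have hAB: "hw (z i @ a) (z j @ b) = Lw (z i) (hw a (z j @ b)) + Lw (z j) (hw (z i @ a) b)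
      + Lw (z (i + j)) (hw a b)"
    using hw_rec ijk abc by simp
  have mC: "mon (z k @ c) = Lw (z k) (mon c)" by (simp add: Lw_mon)
  have rec: "harm (Lw (z n) P) (mon (z k @ c)) = Lw (z n) (harm P (mon (z k @ c)))
      + Lw (z k) (harm (Lw (z n) P) (mon c)) + Lw (z (n + k)) (harm P (mon c))"
    if "1 \<le> n" "finsupp P" "h1supp P" for n P
    unfolding mC using harm_rec[of n k P "mon c"] that ijk abc by (simp add: finsupp_mon supp_mon)
  have "Lw (z k) (harm (hw (z i @ a) (z j @ b)) (mon c)) =
      Lw (z k) (harm (Lw (z i) (hw a (z j @ b))) (mon c))
      + Lw (z k) (harm (Lw (z j) (hw (z i @ a) b)) (mon c))
      + Lw (z k) (harm (Lw (z (i + j)) (hw a b)) (mon c))"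
    unfolding hAB by (simp add: harm_add_left finsupp_add finsupp_Lw finite_supp_hw Lw_add)
  moreover have "harm (hw (z i @ a) (z j @ b)) (mon (z k @ c)) =
      harm (Lw (z i) (hw a (z j @ b))) (mon (z k @ c))
      + harm (Lw (z j) (hw (z i @ a) b)) (mon (z k @ c))
      + harm (Lw (z (i + j)) (hw a b)) (mon (z k @ c))"
    unfolding hAB by (simp add: harm_add_left finsupp_add finsupp_Lw finite_supp_hw)
  ultimately show ?thesis
    using rec[of i] rec[of j] rec[of "i + j"] ijk
    by (simp add: triple_split_def finite_supp_hw h1supp_hw add_ac)
qed

lemma harm_mon_hw_split:
  assumes ijk: "1 \<le> i" "1 \<le> j" "1 \<le> k" and abc: "h1word a" "h1word b" "h1word c"
  shows "harm (mon (z i @ a)) (hw (z j @ b) (z k @ c)) =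
    triple_split (\<lambda>a b c. harm (mon a) (hw b c)) i j k a b c"
proof -
  have hBC: "hw (z j @ b) (z k @ c) = Lw (z j) (hw b (z k @ c)) + Lw (z k) (hw (z j @ b) c)
      + Lw (z (j + k)) (hw b c)"
    using hw_rec ijk abc by simp
  have mA: "mon (z i @ a) = Lw (z i) (mon a)" by (simp add: Lw_mon)
  have rec: "harm (mon (z i @ a)) (Lw (z n) Q) = Lw (z i) (harm (mon a) (Lw (z n) Q))
      + Lw (z n) (harm (mon (z i @ a)) Q) + Lw (z (i + n)) (harm (mon a) Q)"
    if "1 \<le> n" "finsupp Q" "h1supp Q" for n Q
    unfolding mA using harm_rec[of i n "mon a" Q] that ijk abc by (simp add: finsupp_mon supp_mon)
  have "Lw (z i) (harm (mon a) (hw (z j @ b) (z k @ c))) =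
      Lw (z i) (harm (mon a) (Lw (z j) (hw b (z k @ c))))
      + Lw (z i) (harm (mon a) (Lw (z k) (hw (z j @ b) c)))
      + Lw (z i) (harm (mon a) (Lw (z (j + k)) (hw b c)))"
    unfolding hBC by (simp add: harm_add_right finsupp_add finsupp_Lw finite_supp_hw Lw_add)
  moreover have "harm (mon (z i @ a)) (hw (z j @ b) (z k @ c)) =
      harm (mon (z i @ a)) (Lw (z j) (hw b (z k @ c)))
      + harm (mon (z i @ a)) (Lw (z k) (hw (z j @ b) c))
      + harm (mon (z i @ a)) (Lw (z (j + k)) (hw b c))"
    unfolding hBC by (simp add: harm_add_right finsupp_add finsupp_Lw finite_supp_hw)
  ultimately show ?thesis
    using rec[of j] rec[of k] rec[of "j + k"] ijk
    by (simp add: triple_split_def finite_supp_hw h1supp_hw add_ac)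
qed

text \<open>Associativity on words, by induction on the total length: both bracketings expand by
  the same triple splitting into products of strictly shorter words.\<close>
lemma harm_assoc_words:
  "h1word a \<Longrightarrow> h1word b \<Longrightarrow> h1word c \<Longrightarrow> harm (hw a b) (mon c) = harm (mon a) (hw b c)"
proof (induction "length a + length b + length c" arbitrary: a b c rule: less_induct)
  case less
  consider "a = []" | "b = []" | "c = []" | "a \<noteq> [] \<and> b \<noteq> [] \<and> c \<noteq> []" by blast
  then show ?case
  proof cases
    case 1
    then show ?thesis using less.prems
      by (simp add: hw_Nil_left harm_mon_Nil_left finite_supp_hw h1supp_hw hw_harm[symmetric])
  next
    case 2
    then show ?thesis using less.prems by (simp add: hw_Nil_left hw_Nil_right)
  next
    case 3
    then show ?thesis using less.prems
      by (simp add: hw_Nil_right harm_mon_Nil_right finite_supp_hw h1supp_hw hw_harm[symmetric])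
  next
    case 4
    then obtain i a' j b' k c' where
      A: "1 \<le> i" "h1word a'" "a = z i @ a'" and
      B: "1 \<le> j" "h1word b'" "b = z j @ b'" and
      C: "1 \<le> k" "h1word c'" "c = z k @ c'"
      using h1word_split less.prems by meson
    have "triple_split (\<lambda>a b c. harm (hw a b) (mon c)) i j k a' b' c' =
        triple_split (\<lambda>a b c. harm (mon a) (hw b c)) i j k a' b' c'"
      unfolding triple_split_def using A B C
      by (simp add: less.hyps h1word_z_append)
    then show ?thesis
      using A B C by (simp add: harm_hw_mon_split harm_mon_hw_split)
  qed
qed

lemma harm_assoc:
  assumes "h1word a" "h1word b" "finsupp v" "h1supp v"
  shows "harm (hw a b) v = harm (mon a) (harm (mon b) v)"
proof -
  have "harm (hw a b) v = linext (\<lambda>c. harm (hw a b) (mon c)) v"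
    by (rule harm_second)
  also have "\<dots> = linext (\<lambda>c. harm (mon a) (hw b c)) v"
    by (rule linext_cong) (use harm_assoc_words assms in auto)
  also have "\<dots> = harm (mon a) (linext (hw b) v)"
    by (rule harm_linext_right[symmetric]) (use assms finite_supp_hw in auto)
  also have "\<dots> = harm (mon a) (harm (mon b) v)" by (simp add: harm_mon_left)
  finally show ?thesis .
qed


section \<open>The operators lambda(X) - X on generators\<close>

text \<open>For the generator X = L_{z_j} H_u we have lambda(X) - X = H_{z_j u} - L_{z_j} H_u.\<close>
fun Dgen :: "nat \<times> word \<Rightarrow> poly \<Rightarrow> poly" where
  "Dgen (j, u) v = harm (mon (z j @ u)) v - Lw (z j) (harm (mon u) v)"

lemma Dgen_split: "Dgen e v = harm (mon (z (fst e) @ snd e)) v - Lw (z (fst e)) (harm (mon (snd e)) v)"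
  by (cases e) simp

lemma Dop_linext: "Dop c v = linext (\<lambda>e. Dgen e v) c"
  by (simp add: Dgen_split Dop_def Lam_def Op_def Hop_def linext_def fun_eq_iff case_prod_beta
      sum_subtractf right_diff_distrib)

lemma finsupp_Dgen: "finsupp v \<Longrightarrow> finsupp (Dgen e v)"
  by (cases e) (simp add: finsupp_diff finsupp_harm finsupp_mon finsupp_Lw)

lemma Dgen_linext:
  assumes "finsupp c" "\<forall>t\<in>supp c. finsupp (G t)"
  shows "Dgen e (linext G c) = linext (\<lambda>t. Dgen e (G t)) c"
  by (cases e) (simp add: harm_linext_right[OF assms] Lw_linext linext_diff_kernel)

definition comb_at :: "nat \<Rightarrow> poly \<Rightarrow> comb" where
  "comb_at j p = (\<lambda>(i, a). if i = j then p a else 0)"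

lemma supp_comb_at: "supp (comb_at j p) = Pair j ` supp p"
  by (auto simp: supp_def comb_at_def split: if_splits)

lemma finsupp_comb_at: "finsupp p \<Longrightarrow> finsupp (comb_at j p)"
  by (simp add: supp_comb_at)

lemma linext_comb_at: "linext K (comb_at j p) = linext (\<lambda>a. K (j, a)) p"
proof
  fix w
  have "linext K (comb_at j p) w = (\<Sum>t\<in>Pair j ` supp p. comb_at j p t * K t w)"
    by (simp add: linext_def supp_comb_at)
  also have "\<dots> = (\<Sum>a\<in>supp p. comb_at j p (j, a) * K (j, a) w)"
    by (subst sum.reindex) (auto simp: inj_on_def)
  finally show "linext K (comb_at j p) w = linext (\<lambda>a. K (j, a)) p w"
    by (simp add: linext_def comb_at_def)
qed

lemma Dop_comb_at:
  assumes "finsupp P"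
  shows "Dop (comb_at j P) v = harm (Lw (z j) P) v - Lw (z j) (harm P v)"
proof -
  have "Dop (comb_at j P) v = linext (\<lambda>a. harm (mon (z j @ a)) v) P
      - linext (\<lambda>a. Lw (z j) (harm (mon a) v)) P"
    by (simp add: Dop_linext linext_comb_at linext_diff_kernel)
  also have "linext (\<lambda>a. harm (mon (z j @ a)) v) P = harm (Lw (z j) P) v"
    unfolding Lw_as_linext[OF assms] by (rule harm_linext_left[symmetric]) (use assms finsupp_mon in auto)
  also have "linext (\<lambda>a. Lw (z j) (harm (mon a) v)) P = Lw (z j) (harm P v)"
    by (simp add: Lw_linext harm_first[of P v])
  finally show ?thesis .
qed

lemma Dop_add:
  "finsupp c1 \<Longrightarrow> finsupp c2 \<Longrightarrow> Dop (c1 + c2) v = Dop c1 v + Dop c2 v"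
  by (simp add: Dop_linext linext_add)

fun Vpair :: "nat \<times> word \<Rightarrow> nat \<times> word \<Rightarrow> comb" where
  "Vpair (j, u) (m, w) = comb_at j (hw u (z m @ w)) + comb_at m (hw (z j @ u) w)
     + comb_at (j + m) (hw u w)"

lemma finsupp_Vpair: "finsupp (Vpair e f)"
  by (cases e; cases f) (simp add: finsupp_add finsupp_comb_at finite_supp_hw)

lemma Dop_Vpair:
  assumes jm: "1 \<le> j" "1 \<le> m" and uw: "h1word u" "h1word w" and v: "finsupp v" "h1supp v"
  shows "Dop (Vpair (j, u) (m, w)) v =
    harm (mon (z j @ u)) (harm (mon (z m @ w)) v)
    - (Lw (z j) (harm (mon u) (harm (mon (z m @ w)) v))
       + Lw (z m) (harm (mon (z j @ u)) (harm (mon w) v))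
       + Lw (z (j + m)) (harm (mon u) (harm (mon w) v)))"
proof -
  have fh: "finsupp (hw a b)" for a b by (rule finite_supp_hw)
  have "Dop (Vpair (j, u) (m, w)) v =
      (harm (Lw (z j) (hw u (z m @ w))) v + harm (Lw (z m) (hw (z j @ u) w)) v
        + harm (Lw (z (j + m)) (hw u w)) v)
      - (Lw (z j) (harm (hw u (z m @ w)) v) + Lw (z m) (harm (hw (z j @ u) w) v)
        + Lw (z (j + m)) (harm (hw u w) v))"
    by (simp add: Dop_add Dop_comb_at finsupp_add finsupp_comb_at fh)
  also have "harm (Lw (z j) (hw u (z m @ w))) v + harm (Lw (z m) (hw (z j @ u) w)) v
      + harm (Lw (z (j + m)) (hw u w)) v = harm (hw (z j @ u) (z m @ w)) v"
    unfolding hw_rec[OF jm uw] by (simp add: harm_add_left finsupp_add finsupp_Lw fh)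
  also have "harm (hw (z j @ u) (z m @ w)) v = harm (mon (z j @ u)) (harm (mon (z m @ w)) v)"
    by (rule harm_assoc) (use uw v h1word_z_append in auto)
  also have "harm (hw u (z m @ w)) v = harm (mon u) (harm (mon (z m @ w)) v)"
    by (rule harm_assoc) (use uw v h1word_z_append in auto)
  also have "harm (hw (z j @ u) w) v = harm (mon (z j @ u)) (harm (mon w) v)"
    by (rule harm_assoc) (use uw v h1word_z_append in auto)
  also have "harm (hw u w) v = harm (mon u) (harm (mon w) v)"
    by (rule harm_assoc) (use uw v in auto)
  finally show ?thesis .
qed

lemma Dgen_Dgen:
  assumes jm: "1 \<le> j" "1 \<le> m" and uw: "h1word u" "h1word w" and v: "finsupp v" "h1supp v"
  shows "Dgen (j, u) (Dgen (m, w) v) = Dop (Vpair (j, u) (m, w)) v"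
proof -
  define H1 where "H1 = harm (mon (z m @ w)) v"
  define Hw where "Hw = harm (mon w) v"
  have fH: "finsupp H1" "finsupp Hw" by (simp_all add: H1_def Hw_def finsupp_harm finsupp_mon v)
  have rec: "harm (mon (z j @ u)) (Lw (z m) Hw) = Lw (z j) (harm (mon u) (Lw (z m) Hw))
      + Lw (z m) (harm (mon (z j @ u)) Hw) + Lw (z (j + m)) (harm (mon u) Hw)"
    using harm_rec[of j m "mon u" Hw] jm uw fH
    by (simp add: finsupp_mon supp_mon Lw_mon Hw_def h1supp_harm)
  have "Dgen (j, u) (Dgen (m, w) v) = harm (mon (z j @ u)) (H1 - Lw (z m) Hw)
      - Lw (z j) (harm (mon u) (H1 - Lw (z m) Hw))"
    by (simp add: H1_def Hw_def)
  also have "\<dots> = harm (mon (z j @ u)) H1 - harm (mon (z j @ u)) (Lw (z m) Hw)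
      - Lw (z j) (harm (mon u) H1) + Lw (z j) (harm (mon u) (Lw (z m) Hw))"
    by (simp add: harm_diff_right fH finsupp_Lw Lw_diff)
  also have "\<dots> = Dop (Vpair (j, u) (m, w)) v"
    unfolding Dop_Vpair[OF jm uw v] rec by (simp add: H1_def Hw_def algebra_simps)
  finally show ?thesis .
qed

lemma supp_Vpair:
  assumes j: "1 \<le> j" "h1word u" and m: "1 \<le> m" "h1word w"
    and pa: "(p, a) \<in> supp (Vpair (j, u) (m, w))"
  shows "1 \<le> p \<and> h1word a \<and> p + length a = (j + length u) + (m + length w)"
proof -
  have "supp (Vpair (j, u) (m, w)) \<subseteq> supp (comb_at j (hw u (z m @ w)))
      \<union> supp (comb_at m (hw (z j @ u) w)) \<union> supp (comb_at (j + m) (hw u w))"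
    by (auto simp: supp_def)
  with pa consider "p = j" "a \<in> supp (hw u (z m @ w))" | "p = m" "a \<in> supp (hw (z j @ u) w)"
    | "p = j + m" "a \<in> supp (hw u w)"
    by (auto simp: supp_comb_at)
  then show ?thesis
    by cases (use j m h1supp_hw length_supp_hw h1word_z_append in fastforce)+
qed


definition Vcomb :: "comb \<Rightarrow> comb \<Rightarrow> comb" where
  "Vcomb cX cY = linext (\<lambda>(e, f). Vpair e f) (\<lambda>(e, f). cX e * cY f)"

lemma finsupp_Vcomb: "finsupp cX \<Longrightarrow> finsupp cY \<Longrightarrow> finsupp (Vcomb cX cY)"
  unfolding Vcomb_def by (intro finsupp_linext) (auto simp: supp_tensor finsupp_Vpair)

lemma Dop_Dop:
  assumes X: "finsupp cX" "\<forall>(j, u)\<in>supp cX. 1 \<le> j \<and> h1word u"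
    and Y: "finsupp cY" "\<forall>(m, w)\<in>supp cY. 1 \<le> m \<and> h1word w"
    and v: "finsupp v" "h1supp v"
  shows "Dop cX (Dop cY v) = Dop (Vcomb cX cY) v"
proof -
  have T: "finsupp (\<lambda>(e, f). cX e * cY f)" using X Y by (simp add: supp_tensor)
  have "Dop cX (Dop cY v) = linext (\<lambda>e. linext (\<lambda>f. Dgen e (Dgen f v)) cY) cX"
    unfolding Dop_linext by (rule linext_cong, rule Dgen_linext) (use Y v finsupp_Dgen in auto)
  also have "\<dots> = linext (\<lambda>(e, f). Dgen e (Dgen f v)) (\<lambda>(e, f). cX e * cY f)"
    by (rule linext_tensor)
  also have "\<dots> = linext (\<lambda>(e, f). Dop (Vpair e f) v) (\<lambda>(e, f). cX e * cY f)"
  proof (rule linext_cong, clarify)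
    fix j u m w assume "((j, u), (m, w)) \<in> supp (\<lambda>(e, f). cX e * cY f)"
    then have "1 \<le> j" "1 \<le> m" "h1word u" "h1word w" using X Y by (auto simp: supp_tensor)
    then show "Dgen (j, u) (Dgen (m, w) v) = Dop (Vpair (j, u) (m, w)) v"
      using v by (rule Dgen_Dgen)
  qed
  also have "\<dots> = linext (\<lambda>e. Dgen e v) (Vcomb cX cY)"
    unfolding Vcomb_def Dop_linext
    by (subst linext_comp) (use T finsupp_Vpair in \<open>auto simp: split_def\<close>)
  finally show ?thesis by (simp add: Dop_linext)
qed

lemma inWp_Vcomb:
  assumes "inWp k cX" "inWp l cY"
  shows "inWp (k + l) (Vcomb cX cY)"
  unfolding inWp_def
proof (intro conjI ballI)
  show "finsupp (Vcomb cX cY)" using assms by (simp add: inWp_def finsupp_Vcomb)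
next
  fix t assume "t \<in> supp (Vcomb cX cY)"
  then obtain j u m w where jm: "(j, u) \<in> supp cX" "(m, w) \<in> supp cY"
      and t: "t \<in> supp (Vpair (j, u) (m, w))"
    using supp_linext[of "\<lambda>(e, f). Vpair e f" "\<lambda>(e, f). cX e * cY f"]
    by (auto simp: Vcomb_def supp_tensor)
  moreover obtain p a where "t = (p, a)" by fastforce
  ultimately show "case t of (j', w') \<Rightarrow> 1 \<le> j' \<and> j' \<le> k + l \<and> h1word w' \<and> length w' = k + l - j'"
    using supp_Vpair[of j u m w p a] assms by (fastforce simp: inWp_def)
qed

theorem mainTheorem13:
  fixes k l :: nat and cX cY :: comb
  assumes "1 \<le> k" and "1 \<le> l" and "inWp k cX" and "inWp l cY"
  shows "\<exists>cV. inWp (k + l) cV \<and> (\<forall>v. inH1 v \<longrightarrow> Dop cX (Dop cY v) = Dop cV v)"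
proof (intro exI conjI allI impI)
  show "inWp (k + l) (Vcomb cX cY)" using assms(3,4) by (rule inWp_Vcomb)
next
  fix v assume "inH1 v"
  then show "Dop cX (Dop cY v) = Dop (Vcomb cX cY) v"
    using assms(3,4) by (intro Dop_Dop) (auto simp: inWp_def inH1_def)
qed

end
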